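(* Let $X$ be a Banach space and $f_k:X\to\mathbb{R}\cup\{+\infty\}$ $(k\in\mathbb{N}\cup\{0\})$ proper convex functions such that the set $C:=\operatorname{dom}f_0\cap\{x\in X: f_k(x)\le0\ \forall k\in\mathbb{N}\}$ is nonempty. Consider the problem (P): minimize $f_0(x)$ subject to $f_k(x)\le0$ $(k\in\mathbb{N})$, with optimal value $v(\mathrm{P})$, and the dual problems (D) and (D$_m$) defined in the context. Suppose $v(\mathrm{P})>-\infty$. Then for every $m=0,1,\ldots$, $$(\operatorname{cl}v)(0)\le v(\mathrm{D})\le v(\mathrm{D}_m)\le v(\mathrm{P}).$$ If, additionally, the Slater condition holds, i.e., there exists $x\in\operatorname{dom}f_0$ with $\sup_{k\in\mathbb{N}}f_k(x)<0$, then $v(\mathrm{P})=v(\mathrm{D})=v(\mathrm{D}_m)$ for every $m=0,1,\ldots$, and both (D) and (D$_m$) have solutions (the suprema defining them are attained). Moreover, in this case, if $\lambda=(\lambda_1,\lambda_2,\ldots)\in\ell^1_+$, $\lambda_\infty\in\mathbb{R}_+$ is a solution of (D), then $$\hat\lambda:=(\lambda_1,\ldots,\lambda_m,\lambda_{m+1}+\lambda_\infty+\alpha,\lambda_{m+2}+\lambda_\infty+\alpha,\ldots)$$ is a solution of (D$_m$), where $\alpha=0$ if $\lambda_\infty>0$ and $\alpha=1$ otherwise.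
   Context: Conventions: $0\cdot(+\infty)=+\infty$, $(+\infty)-(+\infty)=+\infty$, $\inf\emptyset=+\infty$. $\ell^1_+$ and $\ell^\infty_+$ are the sets of sequences in $\ell^1$, resp. $\ell^\infty$, with nonnegative entries; $\mathbb{R}_+=[0,+\infty)$. The value function is $v(\varepsilon):=\inf\{f_0(x): f_k(x)\le\varepsilon\ \forall k\in\mathbb{N}\}$ for $\varepsilon\in\mathbb{R}$, so $v(\mathrm{P})=v(0)$; $\operatorname{cl}v$ is its lower semicontinuous envelope (largest lower semicontinuous function majorized by $v$). Let $f_\infty(x):=\limsup_{k\to\infty}f_k(x)$ and $f_k^+:=\max\{f_k,0\}$. For $x\in X$, $\lambda\in\ell^1_+$, $\lambda_\infty\ge0$: $L(x,\lambda,\lambda_\infty):=f_0(x)+\overline{\sum_{k\in\mathbb{N}}}\lambda_kf_k(x)+\lambda_\infty f_\infty(x)$, where $\overline{\sum_{k\in\mathbb{N}}}\lambda_kf_k(x):=\limsup_{n\to\infty}\sum_{k=1}^n\lambda_kf_k(x)$. For $m\in\{0,1,\ldots\}$ and $\lambda\in\ell^\infty_+$: $L_m(x,\lambda):=f_0(x)+\sum_{k=1}^m\lambda_kf_k(x)+\sum_{k=m+1}^{\infty}\lambda_kf_k^+(x)$ (the first sum is $0$ when $m=0$). (D) is the problem $\sup_{\lambda\in\ell^1_+,\lambda_\infty\in\mathbb{R}_+}\inf_{x\in X}L(x,\lambda,\lambda_\infty)$ with value $v(\mathrm{D})$; (D$_m$) is $\sup_{\lambda\in\ell^\infty_+}\inf_{x\in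 X}L_m(x,\lambda)$ with value $v(\mathrm{D}_m)$. A solution of a dual problem is a point where its supremum is attained. *)

theory Defs
  imports "HOL-Analysis.Analysis"
begin

text \<open>Multiplication of a nonnegative real by an extended real with the convention
  0 * (+inf) = +inf.\<close>
definition emul :: "real \<Rightarrow> ereal \<Rightarrow> ereal" where
  "emul c a = (if a = \<infinity> then \<infinity> else ereal c * a)"

definition proper_convex :: "('a::real_vector \<Rightarrow> ereal) \<Rightarrow> bool" where
  "proper_convex g \<longleftrightarrow> (\<forall>x. g x \<noteq> -\<infinity>) \<and> (\<exists>x. g x \<noteq> \<infinity>) \<and>
     (\<forall>x y t. 0 < t \<and> t < 1 \<longrightarrow>
        g ((1 - t) *\<^sub>R x + t *\<^sub>R y) \<le> ereal (1 - t) * g x + ereal t * g y)"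

definition valfun :: "(nat \<Rightarrow> 'a \<Rightarrow> ereal) \<Rightarrow> real \<Rightarrow> ereal" where
  "valfun f \<epsilon> = Inf {f 0 x | x. \<forall>k\<ge>1. f k x \<le> ereal \<epsilon>}"

definition lsc :: "(real \<Rightarrow> ereal) \<Rightarrow> bool" where
  "lsc g \<longleftrightarrow> (\<forall>x. g x \<le> Liminf (at x) g)"

definition lsc_hull :: "(real \<Rightarrow> ereal) \<Rightarrow> real \<Rightarrow> ereal" where
  "lsc_hull v x = Sup {g x | g. lsc g \<and> (\<forall>y. g y \<le> v y)}"

definition f_inf :: "(nat \<Rightarrow> 'a \<Rightarrow> ereal) \<Rightarrow> 'a \<Rightarrow> ereal" where
  "f_inf f x = limsup (%k. f k x)"

definition ell1_plus :: "(nat \<Rightarrow> real) \<Rightarrow> bool" where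
  "ell1_plus l \<longleftrightarrow> (\<forall>k. 0 \<le> l k) \<and> summable l"

definition ellinf_plus :: "(nat \<Rightarrow> real) \<Rightarrow> bool" where
  "ellinf_plus l \<longleftrightarrow> (\<forall>k. 0 \<le> l k) \<and> bounded (range l)"

text \<open>Lagrangian L(x, lambda, lambda_inf); lambda is indexed by k >= 1 (lambda 0 is unused).\<close>
definition lagr :: "(nat \<Rightarrow> 'a \<Rightarrow> ereal) \<Rightarrow> 'a \<Rightarrow> (nat \<Rightarrow> real) \<Rightarrow> real \<Rightarrow> ereal" where
  "lagr f x l linf = f 0 x + limsup (%n. \<Sum>k=1..n. emul (l k) (f k x))
      + emul linf (f_inf f x)"

definition lagr_m :: "(nat \<Rightarrow> 'a \<Rightarrow> ereal) \<Rightarrow> nat \<Rightarrow> 'a \<Rightarrow> (nat \<Rightarrow> real) \<Rightarrow> ereal" where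
  "lagr_m f m x l = f 0 x + (\<Sum>k=1..m. emul (l k) (f k x))
      + (\<Sum>k. if m < k then emul (l k) (max (f k x) 0) else 0)"

definition vD :: "(nat \<Rightarrow> 'a \<Rightarrow> ereal) \<Rightarrow> ereal" where
  "vD f = (SUP p \<in> {(l, linf). ell1_plus l \<and> 0 \<le> linf}.
              INF x. lagr f x (fst p) (snd p))"

definition vDm :: "(nat \<Rightarrow> 'a \<Rightarrow> ereal) \<Rightarrow> nat \<Rightarrow> ereal" where
  "vDm f m = (SUP l \<in> {l. ellinf_plus l}. INF x. lagr_m f m x l)"

definition solD :: "(nat \<Rightarrow> 'a \<Rightarrow> ereal) \<Rightarrow> (nat \<Rightarrow> real) \<Rightarrow> real \<Rightarrow> bool" where
  "solD f l linf \<longleftrightarrow> ell1_plus l \<and> 0 \<le> linf \<and> (INF x. lagr f x l linf) = vD f"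

definition solDm :: "(nat \<Rightarrow> 'a \<Rightarrow> ereal) \<Rightarrow> nat \<Rightarrow> (nat \<Rightarrow> real) \<Rightarrow> bool" where
  "solDm f m l \<longleftrightarrow> ellinf_plus l \<and> (INF x. lagr_m f m x l) = vDm f m"

end

theory Submission
  imports Defs
begin

text \<open>Weak duality holds pointwise: \<open>L\<^sub>m(\<cdot>, \<lambda>) \<le> f\<^sub>0\<close> on the feasible set, and for
  dual feasible \<open>(\<lambda>, \<lambda>\<^sub>\<infinity>)\<close> the shifted multiplier \<open>\<lambda>'\<close> of the statement satisfies
  \<open>L(\<cdot>, \<lambda>, \<lambda>\<^sub>\<infinity>) \<le> L\<^sub>m(\<cdot>, \<lambda>')\<close>.

  For the converse bounds all constraints are aggregated into the single convex constraint
  \<open>sup\<^sub>k f\<^sub>k \<le> \<epsilon>\<close>. A strictly feasible point (any feasible point if \<open>\<epsilon> > 0\<close>, the Slater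
  point if \<open>\<epsilon> = 0\<close>) yields a scalar multiplier \<open>\<mu> \<ge> 0\<close> with
  \<open>v(\<epsilon>) \<le> f\<^sub>0 + \<mu> sup\<^sub>k f\<^sub>k\<close>. For weights \<open>w \<ge> 0\<close> with partial sums at most \<open>\<mu>\<close> the
  truncated Lagrangians \<open>f\<^sub>0 + \<Sum>\<^sub>k\<^sub>\<le>\<^sub>N w\<^sub>k f\<^sub>k + (\<mu> - \<Sum>\<^sub>k\<^sub>\<le>\<^sub>N w\<^sub>k) sup\<^sub>k\<^sub>>\<^sub>N f\<^sub>k\<close>
  decrease in \<open>N\<close> towards \<open>L(\<cdot>, w, \<mu> - \<Sum>\<^sub>k w\<^sub>k)\<close>, the mass escaping to infinity becoming
  \<open>\<lambda>\<^sub>\<infinity>\<close>, and at each single point a point mass on an almost worst constraint makes them all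
  nearly as large as \<open>f\<^sub>0 + \<mu> sup\<^sub>k f\<^sub>k\<close>. These weights form a compact convex set in the
  product topology, so a minimax theorem produces one \<open>w \<in> \<ell>\<^sup>1\<close> that works at all points
  simultaneously. Hence \<open>v(\<epsilon>) \<le> v(D)\<close> for \<open>\<epsilon> > 0\<close>, which gives \<open>(cl v)(0) \<le> v(D)\<close>, and
  under the Slater condition (D) has a solution of value \<open>v(P)\<close>.\<close>

section \<open>Convex sets in the plane avoiding a quadrant\<close>

lemma slope_nonneg_if_bounded_below:
  fixes a b d :: real
  assumes "\<And>s. 0 \<le> s \<Longrightarrow> b \<le> a * s + d"
  shows "0 \<le> a"
proof (rule ccontr)
  assume "\<not> 0 \<le> a"
  then have "a * ((\<bar>b - d\<bar> + 1) / - a) = - (\<bar>b - d\<bar> + 1)" by (simp add: field_simps)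
  moreover have "b \<le> a * ((\<bar>b - d\<bar> + 1) / - a) + d"
    using \<open>\<not> 0 \<le> a\<close> by (intro assms divide_nonneg_pos) auto
  ultimately show False by linarith
qed

lemma convex_avoiding_quadrant_weight:
  fixes A :: "(real \<times> real) set"
  assumes convex: "convex A" and nonempty: "A \<noteq> {}"
    and avoid: "\<And>y1 y2. (y1, y2) \<in> A \<Longrightarrow> y1 < c \<or> y2 < c"
  obtains s where "0 \<le> s" "s \<le> 1" "\<And>y1 y2. (y1, y2) \<in> A \<Longrightarrow> (1 - s) * y1 + s * y2 \<le> c"
proof -
  have "convex ({c..} \<times> {c..})" "{c..} \<times> {c..} \<noteq> {}" by (auto simp: convex_Times)
  moreover have "A \<inter> {c..} \<times> {c..} = {}" using avoid by fastforce
  ultimately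
  obtain a b where "a \<noteq> 0" and below: "\<forall>p\<in>A. inner a p \<le> b"
    and above: "\<forall>p\<in>{c..} \<times> {c..}. b \<le> inner a p"
    using separating_hyperplane_sets[OF convex _ nonempty] by blast
  obtain a1 a2 where a: "a = (a1, a2)" by (cases a)
  have above': "b \<le> a1 * y1 + a2 * y2" if "c \<le> y1" "c \<le> y2" for y1 y2
    using above that by (auto simp: a)
  have "0 \<le> a1"
  proof (rule slope_nonneg_if_bounded_below)
    fix s :: real assume "0 \<le> s"
    then show "b \<le> a1 * s + (a1 * c + a2 * c)" using above'[of "c + s" c] by (simp add: algebra_simps)
  qed
  moreover have "0 \<le> a2"
  proof (rule slope_nonneg_if_bounded_below)
    fix s :: real assume "0 \<le> s"
    then show "b \<le> a2 * s + (a1 * c + a2 * c)" using above'[of c "c + s"] by (simp add: algebra_simps)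
  qed
  ultimately have pos: "0 < a1 + a2" using \<open>a \<noteq> 0\<close> a by (auto simp: zero_prod_def)
  show thesis
  proof
    show "0 \<le> a2 / (a1 + a2)" "a2 / (a1 + a2) \<le> 1"
      using \<open>0 \<le> a1\<close> \<open>0 \<le> a2\<close> pos by auto
    fix y1 y2 assume "(y1, y2) \<in> A"
    then have "a1 * y1 + a2 * y2 \<le> c * (a1 + a2)"
      using below above'[of c c] by (auto simp: a algebra_simps)
    moreover have "1 - a2 / (a1 + a2) = a1 / (a1 + a2)"
      using pos by (simp add: field_simps)
    then have "(1 - a2 / (a1 + a2)) * y1 + a2 / (a1 + a2) * y2 = (a1 * y1 + a2 * y2) / (a1 + a2)"
      by (simp add: add_divide_distrib)
    ultimately show "(1 - a2 / (a1 + a2)) * y1 + a2 / (a1 + a2) * y2 \<le> c"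
      using pos by (simp add: pos_divide_le_eq)
  qed
qed

text \<open>The weight is pushed into the open interval at the price of a margin, which is only
  possible on points bounded above.\<close>

lemma convex_avoiding_quadrant_strict_weight:
  fixes A :: "(real \<times> real) set"
  assumes convex: "convex A" and avoid: "\<And>y1 y2. (y1, y2) \<in> A \<Longrightarrow> y1 < c' \<or> y2 < c'"
    and "c' < c"
  obtains t where "0 < t" "t < 1"
    "\<And>y1 y2. (y1, y2) \<in> A \<Longrightarrow> y1 \<le> B \<Longrightarrow> y2 \<le> B \<Longrightarrow> (1 - t) * y1 + t * y2 < c"
proof (cases "A = {}")
  case True
  then show thesis by (intro that[of "1/2"]) auto
next
  case False
  obtain s where s: "0 \<le> s" "s \<le> 1" and sA: "\<And>y1 y2. (y1, y2) \<in> A \<Longrightarrow> (1 - s) * y1 + s * y2 \<le> c'"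
    using convex_avoiding_quadrant_weight[OF convex False avoid] by blast
  define q where "q = \<bar>B - c\<bar> + 1"
  have q: "0 < q" "B - c < q" unfolding q_def by linarith+
  define e where "e = (c - c') / (2 * q)"
  have e: "0 < e" "2 * e * (B - c) < c - c'"
  proof -
    show "0 < e" unfolding e_def using \<open>c' < c\<close> q by simp
    then have "2 * e * (B - c) < 2 * e * q" using q by simp
    also have "\<dots> = c - c'" unfolding e_def using q by simp
    finally show "2 * e * (B - c) < c - c'" .
  qed
  define d where "d = 1 + 2 * e"
  have d: "0 < d" "1 - (s + e) / d = (1 - s + e) / d" using e(1) by (simp_all add: d_def field_simps)
  show thesis
  proof
    show "0 < (s + e) / d" "(s + e) / d < 1"
      using s e unfolding d_def by auto
    fix y1 y2 assume "(y1, y2) \<in> A" "y1 \<le> B" "y2 \<le> B"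
    then have "(1 - s) * y1 + s * y2 + e * (y1 + y2) \<le> c' + e * (2 * B)"
      using sA[of y1 y2] e(1) by (intro add_mono mult_left_mono) auto
    also have "\<dots> = c * d + ((c' - c) + 2 * e * (B - c))" unfolding d_def by algebra
    also have "\<dots> < c * d" using e(2) by linarith
    finally have "(1 - s) * y1 + s * y2 + e * (y1 + y2) < c * d" .
    moreover have "(1 - (s + e) / d) * y1 + (s + e) / d * y2 = ((1 - s) * y1 + s * y2 + e * (y1 + y2)) / d"
      using d(1) unfolding d(2) by (simp add: field_simps)
    ultimately show "(1 - (s + e) / d) * y1 + (s + e) / d * y2 < c"
      using d(1) by (simp add: pos_divide_less_eq)
  qed
qed

lemma decseq_convex_comb_lower_limits:
  fixes u v :: "nat \<Rightarrow> real"
  assumes "decseq u" "decseq v" "0 < t" "t < 1"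
    and "\<And>N. u N \<le> B" "\<And>N. v N \<le> B" and comb: "\<And>N. c \<le> (1 - t) * u N + t * v N"
  obtains y1 y2 where "\<And>N. y1 \<le> u N" "\<And>N. y2 \<le> v N" "c \<le> (1 - t) * y1 + t * y2"
proof -
  have "t * v N \<le> t * B" "(1 - t) * u N \<le> (1 - t) * B" for N
    using assms(3-6) by (simp_all add: mult_left_mono)
  then have "c - t * B \<le> (1 - t) * u N" and "c - (1 - t) * B \<le> t * v N" for N
    using comb[of N] by (smt (verit))+
  then have "\<forall>N. (c - t * B) / (1 - t) \<le> u N" "\<forall>N. (c - (1 - t) * B) / t \<le> v N"
    using assms(3,4) by (simp_all add: divide_le_eq mult.commute)
  obtain y1 where y1: "u \<longlonglongrightarrow> y1" "\<forall>N. y1 \<le> u N"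
    by (rule decseq_convergent[OF assms(1) \<open>\<forall>N. (c - t * B) / (1 - t) \<le> u N\<close>])
  obtain y2 where y2: "v \<longlonglongrightarrow> y2" "\<forall>N. y2 \<le> v N"
    by (rule decseq_convergent[OF assms(2) \<open>\<forall>N. (c - (1 - t) * B) / t \<le> v N\<close>])
  have "(\<lambda>N. (1 - t) * u N + t * v N) \<longlonglongrightarrow> (1 - t) * y1 + t * y2"
    by (intro tendsto_intros y1(1) y2(1))
  then have "c \<le> (1 - t) * y1 + t * y2" using comb by (intro LIMSEQ_le_const) auto
  with y1(2) y2(2) show thesis by (intro that) auto
qed

section \<open>A minimax theorem for decreasing saddle sequences\<close>

definition convex_seqs :: "('i \<Rightarrow> real) set \<Rightarrow> bool" where
  "convex_seqs W \<longleftrightarrow>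
     (\<forall>w\<in>W. \<forall>w'\<in>W. \<forall>t. 0 \<le> t \<and> t \<le> 1 \<longrightarrow> (\<lambda>k. (1 - t) * w k + t * w' k) \<in> W)"

text \<open>The infimum over \<open>N\<close> of such a family is convex in \<open>x\<close> and concave and upper
  semicontinuous in \<open>w\<close>, the setting of the Kneser--Fan minimax theorem.\<close>

locale saddle_sequence =
  fixes D :: "'x::real_vector set" and W :: "('i \<Rightarrow> real) set"
    and G :: "nat \<Rightarrow> 'x \<Rightarrow> ('i \<Rightarrow> real) \<Rightarrow> real"
  assumes D_nonempty: "D \<noteq> {}" and convex_D: "convex D"
    and compact_W: "compact W" and convex_W: "convex_seqs W"
    and continuous_G: "\<And>N x. x \<in> D \<Longrightarrow> continuous_on UNIV (G N x)"
    and G_Suc_le: "\<And>N x w. x \<in> D \<Longrightarrow> w \<in> W \<Longrightarrow> G (Suc N) x w \<le> G N x w"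
    and convex_G: "\<And>N w. w \<in> W \<Longrightarrow> convex_on D (\<lambda>x. G N x w)"
    and concave_G: "\<And>N x w w' t. x \<in> D \<Longrightarrow> w \<in> W \<Longrightarrow> w' \<in> W \<Longrightarrow> 0 \<le> t \<Longrightarrow> t \<le> 1 \<Longrightarrow>
        (1 - t) * G N x w + t * G N x w' \<le> G N x (\<lambda>k. (1 - t) * w k + t * w' k)"
begin

lemma decseq_G: "x \<in> D \<Longrightarrow> w \<in> W \<Longrightarrow> decseq (\<lambda>N. G N x w)"
  by (rule decseq_SucI) (rule G_Suc_le)

lemma compact_cover_margin:
  assumes K: "compact K" and I: "I \<subseteq> D" and cover: "\<And>w. w \<in> K \<Longrightarrow> \<exists>x\<in>I. \<exists>N. G N x w < c"
  obtains F c' where "F \<subseteq> I" "finite F" "c' < c" "\<forall>w\<in>K. \<exists>x\<in>F. \<exists>N. G N x w < c'"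
proof -
  define U where "U = (\<lambda>(x, N, n::nat). {w. G N x w < c - 1 / Suc n})"
  have "open (U T)" if "T \<in> I \<times> UNIV \<times> UNIV" for T
  proof -
    obtain x N n where "T = (x, N, n)" by (cases T)
    moreover from this have "x \<in> D" using that I by auto
    ultimately show ?thesis unfolding U_def
      using open_Collect_less[OF continuous_G continuous_on_const] by simp
  qed
  moreover have "K \<subseteq> (\<Union>T\<in>I \<times> UNIV \<times> UNIV. U T)"
  proof
    fix w assume "w \<in> K"
    with cover obtain x N where x: "x \<in> I" "G N x w < c" by blast
    then obtain n where "inverse (Suc n) < c - G N x w"
      using reals_Archimedean[of "c - G N x w"] by auto
    then have "w \<in> U (x, N, n)" unfolding U_def by (simp add: inverse_eq_divide)
    with x show "w \<in> (\<Union>T\<in>I \<times> UNIV \<times> UNIV. U T)" by blast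
  qed
  ultimately obtain C where C: "C \<subseteq> I \<times> UNIV \<times> UNIV" "finite C" "K \<subseteq> (\<Union>T\<in>C. U T)"
    by (rule compactE_image[OF K])
  define M where "M = Max ((\<lambda>T. snd (snd T)) ` C)"
  show thesis
  proof
    show "fst ` C \<subseteq> I" "finite (fst ` C)" "c - 1 / Suc M < c" using C by auto
    show "\<forall>w\<in>K. \<exists>x\<in>fst ` C. \<exists>N. G N x w < c - 1 / Suc M"
    proof
      fix w assume "w \<in> K"
      with C(3) obtain T where "T \<in> C" "w \<in> U T" by blast
      moreover obtain x N n where "T = (x, N, n)" by (cases T)
      ultimately have T: "(x, N, n) \<in> C" "w \<in> U (x, N, n)" by simp_all
      have "n \<le> M" unfolding M_def using C(2) T(1) by (intro Max_ge) force+
      then have "1 / Suc M \<le> 1 / Suc n" by (simp add: frac_le)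
      moreover have "G N x w < c - 1 / Suc n" using T(2) unfolding U_def by simp
      ultimately show "\<exists>x\<in>fst ` C. \<exists>N. G N x w < c - 1 / Suc M"
        using T(1) by (intro bexI[of _ x] exI[of _ N]) force+
    qed
  qed
qed

lemma G_bounded_above:
  assumes "compact K" "K \<subseteq> W" "x \<in> D"
  obtains B where "\<forall>w\<in>K. \<forall>N. G N x w \<le> B"
proof -
  have "compact (G 0 x ` K)"
    using assms by (intro compact_continuous_image continuous_on_subset[OF continuous_G]) auto
  then obtain B where B: "\<forall>y\<in>G 0 x ` K. y \<le> B"
    using bounded_imp_bdd_above[OF compact_imp_bounded] unfolding bdd_above_def by blast
  have "G N x w \<le> B" if "w \<in> K" for w N
    using that B decseqD[OF decseq_G[OF assms(3)], of w 0 N] assms(2) by force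
  then show thesis using that by blast
qed

lemma convex_lower_set:
  assumes K: "K \<subseteq> W" "convex_seqs K" and x: "x1 \<in> D" "x2 \<in> D"
  shows "convex {(y1, y2). \<exists>w\<in>K. \<forall>N. y1 \<le> G N x1 w \<and> y2 \<le> G N x2 w}"
  unfolding convex_alt
proof (clarsimp)
  fix y1 y2 z1 z2 w w' and u :: real assume u: "0 \<le> u" "u \<le> 1"
    and w: "w \<in> K" "\<forall>N. y1 \<le> G N x1 w \<and> y2 \<le> G N x2 w"
    and w': "w' \<in> K" "\<forall>N. z1 \<le> G N x1 w' \<and> z2 \<le> G N x2 w'"
  define v where "v = (\<lambda>k. (1 - u) * w k + u * w' k)"
  have mix: "(1 - u) * y + u * z \<le> G N x v" if "x \<in> D" "y \<le> G N x w" "z \<le> G N x w'" for x y z N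
  proof -
    have "(1 - u) * y + u * z \<le> (1 - u) * G N x w + u * G N x w'"
      using that u by (intro add_mono mult_left_mono) auto
    also have "\<dots> \<le> G N x v" unfolding v_def using concave_G that(1) w(1) w'(1) K(1) u by blast
    finally show ?thesis .
  qed
  have "v \<in> K" using K(2) w(1) w'(1) u unfolding convex_seqs_def v_def by blast
  then show "\<exists>v\<in>K. \<forall>N. (1 - u) * y1 + u * z1 \<le> G N x1 v \<and> (1 - u) * y2 + u * z2 \<le> G N x2 v"
    using mix w(2) w'(2) x by blast
qed

lemma comb_eventually_below:
  assumes K: "K \<subseteq> W" and x: "x1 \<in> D" "x2 \<in> D" and t: "0 < t" "t < 1" and w: "w \<in> K"
    and B: "\<And>N. G N x1 w \<le> B" "\<And>N. G N x2 w \<le> B"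
    and below: "\<And>y1 y2. \<forall>N. y1 \<le> G N x1 w \<and> y2 \<le> G N x2 w \<Longrightarrow> y1 \<le> B \<Longrightarrow> y2 \<le> B \<Longrightarrow>
        (1 - t) * y1 + t * y2 < c"
  shows "\<exists>N. G N ((1 - t) *\<^sub>R x1 + t *\<^sub>R x2) w < c"
proof (rule ccontr)
  assume "\<not> (\<exists>N. G N ((1 - t) *\<^sub>R x1 + t *\<^sub>R x2) w < c)"
  then have "c \<le> G N ((1 - t) *\<^sub>R x1 + t *\<^sub>R x2) w" for N by (simp add: not_less)
  moreover have "G N ((1 - t) *\<^sub>R x1 + t *\<^sub>R x2) w \<le> (1 - t) * G N x1 w + t * G N x2 w" for N
    using convex_onD[OF convex_G[where N = N and w = w]] w K x t by auto
  ultimately have "c \<le> (1 - t) * G N x1 w + t * G N x2 w" for N by (meson order_trans)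
  then obtain y1 y2 where y: "\<And>N. y1 \<le> G N x1 w" "\<And>N. y2 \<le> G N x2 w" "c \<le> (1 - t) * y1 + t * y2"
    using decseq_convex_comb_lower_limits[OF decseq_G decseq_G t B] w x K by blast
  moreover have "y1 \<le> B" "y2 \<le> B" using y(1,2)[of 0] B[of 0] by (auto intro: order_trans)
  ultimately show False using below[of y1 y2] by (meson not_le)
qed

text \<open>The two points are merged by separating the convex set of pairs of lower bounds of
  \<open>G N x\<^sub>1 w\<close> and \<open>G N x\<^sub>2 w\<close> from the quadrant above the level \<open>c'\<close>.\<close>

lemma two_point_combination:
  assumes K: "compact K" "K \<subseteq> W" "convex_seqs K" and x: "x1 \<in> D" "x2 \<in> D"
    and cover: "\<And>w. w \<in> K \<Longrightarrow> (\<exists>N. G N x1 w < c) \<or> (\<exists>N. G N x2 w < c)"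
  shows "\<exists>z\<in>D. \<forall>w\<in>K. \<exists>N. G N z w < c"
proof -
  obtain F c' where F: "F \<subseteq> {x1, x2}" and "c' < c"
    and cover': "\<forall>w\<in>K. \<exists>x\<in>F. \<exists>N. G N x w < c'"
    by (rule compact_cover_margin[OF K(1), of "{x1, x2}" c]) (use x cover in auto)
  obtain B1 where B1: "\<forall>w\<in>K. \<forall>N. G N x1 w \<le> B1"
    by (rule G_bounded_above[OF K(1,2) x(1)])
  obtain B2 where B2: "\<forall>w\<in>K. \<forall>N. G N x2 w \<le> B2"
    by (rule G_bounded_above[OF K(1,2) x(2)])
  define A where "A = {(y1, y2). \<exists>w\<in>K. \<forall>N. y1 \<le> G N x1 w \<and> y2 \<le> G N x2 w}"
  have "y1 < c' \<or> y2 < c'" if "(y1, y2) \<in> A" for y1 y2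
  proof -
    from that obtain w where w: "w \<in> K" "\<forall>N. y1 \<le> G N x1 w \<and> y2 \<le> G N x2 w"
      unfolding A_def by blast
    with cover' F obtain N where "G N x1 w < c' \<or> G N x2 w < c'" by blast
    moreover have "y1 \<le> G N x1 w" "y2 \<le> G N x2 w" using w(2) by auto
    ultimately show ?thesis by auto
  qed
  then obtain t where t: "0 < t" "t < 1" and below: "\<And>y1 y2. (y1, y2) \<in> A \<Longrightarrow>
      y1 \<le> max B1 B2 \<Longrightarrow> y2 \<le> max B1 B2 \<Longrightarrow> (1 - t) * y1 + t * y2 < c"
    using convex_avoiding_quadrant_strict_weight[OF _ _ \<open>c' < c\<close>] convex_lower_set[OF K(2,3) x]
    unfolding A_def by blast
  show ?thesis
  proof (intro bexI ballI)
    show "(1 - t) *\<^sub>R x1 + t *\<^sub>R x2 \<in> D" using convex_D x t by (simp add: convex_alt)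
    fix w assume w: "w \<in> K"
    show "\<exists>N. G N ((1 - t) *\<^sub>R x1 + t *\<^sub>R x2) w < c"
    proof (rule comb_eventually_below[OF K(2) x t w])
      show "G N x1 w \<le> max B1 B2" "G N x2 w \<le> max B1 B2" for N
        using B1 B2 w by (auto intro: max.coboundedI1 max.coboundedI2)
      show "(1 - t) * y1 + t * y2 < c"
        if "\<forall>N. y1 \<le> G N x1 w \<and> y2 \<le> G N x2 w" "y1 \<le> max B1 B2" "y2 \<le> max B1 B2" for y1 y2
        using below[of y1 y2] that w unfolding A_def by blast
    qed
  qed
qed

lemma convex_seqs_superlevel:
  assumes K: "K \<subseteq> W" "convex_seqs K" and x: "x \<in> D"
  shows "convex_seqs (K \<inter> {w. \<forall>N. c \<le> G N x w})"
  unfolding convex_seqs_def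
proof (intro ballI allI impI)
  fix w w' and t :: real assume w: "w \<in> K \<inter> {w. \<forall>N. c \<le> G N x w}" "w' \<in> K \<inter> {w. \<forall>N. c \<le> G N x w}"
    and t: "0 \<le> t \<and> t \<le> 1"
  have "c \<le> G N x (\<lambda>k. (1 - t) * w k + t * w' k)" for N
  proof -
    have "c = (1 - t) * c + t * c" by algebra
    also have "\<dots> \<le> (1 - t) * G N x w + t * G N x w'"
      using w t by (intro add_mono mult_left_mono) auto
    also have "\<dots> \<le> G N x (\<lambda>k. (1 - t) * w k + t * w' k)"
      using concave_G x w t K(1) by blast
    finally show ?thesis .
  qed
  moreover have "(\<lambda>k. (1 - t) * w k + t * w' k) \<in> K"
    using K(2) w t unfolding convex_seqs_def by blast
  ultimately show "(\<lambda>k. (1 - t) * w k + t * w' k) \<in> K \<inter> {w. \<forall>N. c \<le> G N x w}" by blast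
qed

text \<open>Induction on the finite set of points: the set of weights not yet handled by the new
  point is again compact and convex, and the two-point case merges the point produced by
  induction with the new one.\<close>

lemma finite_cover_combination:
  assumes "finite F" "F \<subseteq> D"
    and "K \<subseteq> W" "compact K" "convex_seqs K" "\<And>w. w \<in> K \<Longrightarrow> \<exists>x\<in>F. \<exists>N. G N x w < c"
  shows "\<exists>z\<in>D. \<forall>w\<in>K. \<exists>N. G N z w < c"
  using assms
proof (induction F arbitrary: K rule: finite_induct)
  case empty
  then have "K = {}" by blast
  with D_nonempty show ?case by blast
next
  case (insert x F)
  have x: "x \<in> D" and F: "F \<subseteq> D" using insert.prems(1) by auto
  define K' where "K' = K \<inter> {w. \<forall>N. c \<le> G N x w}"
  have "closed {w. \<forall>N. c \<le> G N x w}"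
    using closed_INT[of UNIV "\<lambda>N. {w. c \<le> G N x w}"]
      closed_Collect_le[OF continuous_on_const continuous_G[OF x]] by (simp add: Collect_all_eq)
  then have compact: "compact K'" unfolding K'_def by (rule compact_Int_closed[OF insert.prems(3)])
  have sub: "K' \<subseteq> W" unfolding K'_def using insert.prems(2) by blast
  have convex: "convex_seqs K'" unfolding K'_def by (rule convex_seqs_superlevel[OF insert.prems(2,4) x])
  have cover: "\<exists>y\<in>F. \<exists>N. G N y w < c" if w: "w \<in> K'" for w
  proof -
    from w have "w \<in> K" and x_above: "\<forall>N. c \<le> G N x w" unfolding K'_def by auto
    then obtain y N where y: "y \<in> insert x F" "G N y w < c" using insert.prems(5) by blast
    moreover from x_above y(2) have "y \<noteq> x" by (metis not_le)
    ultimately show ?thesis by blast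
  qed
  from insert.IH[OF F sub compact convex cover]
  obtain z' where z': "z' \<in> D" "\<forall>w\<in>K'. \<exists>N. G N z' w < c" by blast
  have "(\<exists>N. G N z' w < c) \<or> (\<exists>N. G N x w < c)" if "w \<in> K" for w
  proof (cases "w \<in> K'")
    case True
    with z'(2) show ?thesis by blast
  next
    case False
    with that show ?thesis unfolding K'_def by (auto simp: not_le)
  qed
  then show ?case by (rule two_point_combination[OF insert.prems(3,2,4) z'(1) x])
qed

theorem minimax:
  assumes "\<And>x r. x \<in> D \<Longrightarrow> r < \<rho> \<Longrightarrow> \<exists>w\<in>W. \<forall>N. r < G N x w"
  shows "\<exists>w\<in>W. \<forall>x\<in>D. \<forall>N. \<rho> \<le> G N x w"
proof (rule ccontr)
  assume contra: "\<not> ?thesis"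
  obtain F c' where F: "F \<subseteq> D" "finite F" and "c' < \<rho>"
    and cover: "\<forall>w\<in>W. \<exists>x\<in>F. \<exists>N. G N x w < c'"
  proof (rule compact_cover_margin[OF compact_W subset_refl, where c = \<rho>])
    show "\<exists>x\<in>D. \<exists>N. G N x w < \<rho>" if "w \<in> W" for w
      using contra that by (auto simp: not_le)
  qed
  obtain z where z: "z \<in> D" "\<forall>w\<in>W. \<exists>N. G N z w < c'"
    using finite_cover_combination[OF F(2,1) order_refl compact_W convex_W cover[rule_format]] by blast
  obtain w where "w \<in> W" "\<forall>N. c' < G N z w" using assms[OF z(1) \<open>c' < \<rho>\<close>] by blast
  with z(2) show False by (meson not_less_iff_gr_or_eq)
qed
end

section \<open>A multiplier for a single convex constraint\<close>

lemma convex_multiplier_slope_le: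
  fixes A \<Phi> :: "'x::real_vector \<Rightarrow> real"
  assumes A: "convex_on D A" and \<Phi>: "convex_on D \<Phi>"
    and feasible: "\<And>x. x \<in> D \<Longrightarrow> \<Phi> x \<le> \<beta> \<Longrightarrow> \<rho> \<le> A x"
    and y: "y \<in> D" "\<beta> < \<Phi> y" and x: "x \<in> D" "\<Phi> x < \<beta>"
  shows "(\<rho> - A y) / (\<Phi> y - \<beta>) \<le> (A x - \<rho>) / (\<beta> - \<Phi> x)"
proof -
  define a b where "a = \<Phi> y - \<beta>" and "b = \<beta> - \<Phi> x"
  have ab: "0 < a" "0 < b" using x y unfolding a_def b_def by auto
  define t where "t = b / (a + b)"
  have t: "0 \<le> t" "t \<le> 1" "1 - t = a / (a + b)" using ab unfolding t_def by (auto simp: field_simps)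
  have comb: "(1 - t) * u + t * v = (a * u + b * v) / (a + b)" for u v
    unfolding t(3) by (simp add: t_def add_divide_distrib)
  define z where "z = (1 - t) *\<^sub>R x + t *\<^sub>R y"
  have "z \<in> D" unfolding z_def using convex_onD[OF A] A x(1) y(1) t(1,2)
    by (simp add: convex_on_def convex_alt)
  moreover have "\<Phi> z \<le> \<beta>"
  proof -
    have "\<Phi> z \<le> (a * \<Phi> x + b * \<Phi> y) / (a + b)"
      unfolding z_def comb[symmetric] using convex_onD[OF \<Phi> t(1,2) x(1) y(1)] .
    also have "a * \<Phi> x + b * \<Phi> y = \<beta> * (a + b)" unfolding a_def b_def by algebra
    finally show ?thesis using ab by simp
  qed
  ultimately have "\<rho> \<le> A z" by (rule feasible)
  also have "A z \<le> (1 - t) * A x + t * A y" unfolding z_def by (rule convex_onD[OF A t(1,2) x(1) y(1)])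
  also have "\<dots> = (a * A x + b * A y) / (a + b)" by (rule comb)
  finally have "\<rho> \<le> (a * A x + b * A y) / (a + b)" .
  then have "b * (\<rho> - A y) \<le> a * (A x - \<rho>)"
    using ab by (simp add: le_divide_eq algebra_simps)
  then show ?thesis unfolding a_def[symmetric] b_def[symmetric] using ab
    by (simp add: divide_simps mult.commute)
qed

text \<open>The multiplier is the largest slope \<open>(\<rho> - A y) / (\<Phi> y - \<beta>)\<close> over infeasible points,
  which the Slater point bounds from above.\<close>

lemma convex_scalar_multiplier:
  fixes A \<Phi> :: "'x::real_vector \<Rightarrow> real"
  assumes A: "convex_on D A" and \<Phi>: "convex_on D \<Phi>"
    and slater: "xs \<in> D" "\<Phi> xs < \<beta>"
    and feasible: "\<And>x. x \<in> D \<Longrightarrow> \<Phi> x \<le> \<beta> \<Longrightarrow> \<rho> \<le> A x"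
  obtains \<mu> where "0 \<le> \<mu>" "\<forall>x\<in>D. \<rho> \<le> A x + \<mu> * (\<Phi> x - \<beta>)"
proof
  define P where "P = {(\<rho> - A y) / (\<Phi> y - \<beta>) | y. y \<in> D \<and> \<beta> < \<Phi> y}"
  have slope_le: "(\<rho> - A y) / (\<Phi> y - \<beta>) \<le> (A x - \<rho>) / (\<beta> - \<Phi> x)"
    if "y \<in> D" "\<beta> < \<Phi> y" "x \<in> D" "\<Phi> x < \<beta>" for x y
    by (rule convex_multiplier_slope_le[OF A \<Phi>]) (use feasible that in auto)
  have bdd: "bdd_above (insert 0 P)"
    unfolding P_def using slope_le[OF _ _ slater]
    by (intro bdd_aboveI[of _ "max 0 ((A xs - \<rho>) / (\<beta> - \<Phi> xs))"]) force
  show "0 \<le> Sup (insert 0 P)" using bdd by (intro cSup_upper) auto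
  show "\<forall>x\<in>D. \<rho> \<le> A x + Sup (insert 0 P) * (\<Phi> x - \<beta>)"
  proof
    fix x assume x: "x \<in> D"
    consider "\<beta> < \<Phi> x" | "\<Phi> x = \<beta>" | "\<Phi> x < \<beta>" by linarith
    then show "\<rho> \<le> A x + Sup (insert 0 P) * (\<Phi> x - \<beta>)"
    proof cases
      case 1
      then have "(\<rho> - A x) / (\<Phi> x - \<beta>) \<le> Sup (insert 0 P)"
        using x bdd unfolding P_def by (intro cSup_upper) auto
      with 1 show ?thesis by (simp add: divide_le_eq algebra_simps)
    next
      case 2
      with feasible x show ?thesis by simp
    next
      case 3
      have "Sup (insert 0 P) \<le> (A x - \<rho>) / (\<beta> - \<Phi> x)"
        using feasible[OF x] 3 slope_le[OF _ _ x 3] unfolding P_def by (intro cSup_least) auto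
      with 3 show ?thesis by (simp add: le_divide_eq algebra_simps)
    qed
  qed
qed

lemma convex_on_sum_fun:
  assumes "finite I" "convex S" "\<And>i. i \<in> I \<Longrightarrow> convex_on S (f i)"
  shows "convex_on S (\<lambda>x. \<Sum>i\<in>I. f i x)"
  using assms by (induction I rule: finite_induct) (auto simp: convex_on_const)

section \<open>Extended real penalties\<close>

lemma ereal_le_suminf_term:
  fixes g :: "nat \<Rightarrow> ereal"
  assumes "\<And>n. 0 \<le> g n"
  shows "g k \<le> suminf g"
proof -
  have "g k \<le> (\<Sum>n<Suc k. g n)" using sum_mono2[of "{..<Suc k}" "{k}" g] assms by simp
  also have "\<dots> \<le> suminf g" by (rule suminf_upper[OF assms])
  finally show ?thesis .
qed

lemma SUP_finite_less_top:
  fixes u :: "'i \<Rightarrow> ereal"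
  assumes "finite A" "\<And>k. k \<in> A \<Longrightarrow> u k < \<infinity>"
  shows "(SUP k\<in>A. u k) < \<infinity>"
proof (cases "A = {}")
  case False
  then have "Max (u ` A) \<in> u ` A" using assms(1) by (intro Max_in) auto
  then obtain k where "k \<in> A" "Max (u ` A) = u k" by blast
  then show ?thesis using assms False by (simp add: Max_Sup[symmetric])
qed (simp add: bot_ereal_def)

lemma SUP_tail_eq_top:
  fixes u :: "nat \<Rightarrow> ereal"
  assumes "\<And>k. m \<le> k \<Longrightarrow> k < N \<Longrightarrow> u k < \<infinity>" and "(SUP k\<in>{m..}. u k) = \<infinity>"
  shows "(SUP k\<in>{N..}. u k) = \<infinity>"
proof -
  have "(SUP k\<in>{m..}. u k) \<le> sup (SUP k\<in>{m..<N}. u k) (SUP k\<in>{N..}. u k)"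
    unfolding SUP_union[symmetric] by (rule SUP_subset_mono) auto
  moreover have "(SUP k\<in>{m..<N}. u k) < \<infinity>" using assms(1) by (intro SUP_finite_less_top) auto
  ultimately show ?thesis using assms(2) by (auto simp: sup_ereal_def max_def split: if_splits)
qed

lemma limsup_eq_top_of_SUP:
  fixes u :: "nat \<Rightarrow> ereal"
  assumes "\<And>k. m \<le> k \<Longrightarrow> u k < \<infinity>" and "(SUP k\<in>{m..}. u k) = \<infinity>"
  shows "limsup u = \<infinity>"
proof -
  have "(SUP k\<in>{N..}. u k) = \<infinity>" for N
  proof (cases "N \<le> m")
    case True
    then have "(SUP k\<in>{m..}. u k) \<le> (SUP k\<in>{N..}. u k)" by (intro SUP_subset_mono) auto
    with assms(2) show ?thesis by simp
  qed (use assms SUP_tail_eq_top[of m N u] in auto)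
  then show ?thesis unfolding limsup_INF_SUP by simp
qed

lemma emul_nonneg: "0 \<le> c \<Longrightarrow> 0 \<le> a \<Longrightarrow> 0 \<le> emul c a"
  unfolding emul_def by (cases a) auto

lemma emul_ereal: "emul c (ereal a) = ereal (c * a)"
  unfolding emul_def by simp

lemma emul_max_ge:
  assumes "0 \<le> \<gamma>" "\<gamma> \<le> c" "0 \<le> z" "ereal z < a"
  shows "ereal (\<gamma> * z) \<le> emul c (max a 0)"
proof (cases a)
  case (real r)
  with assms have "\<gamma> * z \<le> c * r" "0 \<le> r" by (auto intro!: mult_mono)
  then show ?thesis using real by (simp add: emul_def zero_ereal_def)
qed (use assms in \<open>auto simp: emul_def\<close>)

lemma tail_penalty_eq_top_of_SUP:
  assumes \<gamma>: "0 < \<gamma>" "\<And>k. m < k \<Longrightarrow> \<gamma> \<le> l k" and l: "\<And>k. 0 \<le> l k"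
    and unbounded: "(SUP k\<in>{m<..}. g k) = \<infinity>"
  shows "(\<Sum>k. if m < k then emul (l k) (max (g k) 0) else 0) = \<infinity>"
proof (rule ereal_top)
  fix M :: real
  let ?z = "(\<bar>M\<bar> + 1) / \<gamma>"
  have "ereal ?z < (SUP k\<in>{m<..}. g k)" using unbounded by simp
  then obtain k where k: "m < k" "ereal ?z < g k" unfolding less_SUP_iff by auto
  have "ereal M \<le> ereal (\<gamma> * ?z)" using \<gamma>(1) by simp
  also have "\<dots> \<le> emul (l k) (max (g k) 0)" using \<gamma> k by (intro emul_max_ge) auto
  also have "\<dots> \<le> (\<Sum>k. if m < k then emul (l k) (max (g k) 0) else 0)"
    using ereal_le_suminf_term[of "\<lambda>k. if m < k then emul (l k) (max (g k) 0) else 0" k] k(1) l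
    by (simp add: emul_nonneg)
  finally show "ereal M \<le> (\<Sum>k. if m < k then emul (l k) (max (g k) 0) else 0)" .
qed

lemma tail_penalty_eq_top_of_limsup:
  assumes \<gamma>: "0 < \<gamma>" "\<And>k. m < k \<Longrightarrow> \<gamma> \<le> l k" and l: "\<And>k. 0 \<le> l k"
    and pos: "0 < limsup g"
  shows "(\<Sum>k. if m < k then emul (l k) (max (g k) 0) else 0) = \<infinity>"
proof (rule ccontr)
  define t where "t k = (if m < k then emul (l k) (max (g k) 0) else 0)" for k
  assume "(\<Sum>k. if m < k then emul (l k) (max (g k) 0) else 0) \<noteq> \<infinity>"
  then have fin: "suminf t \<noteq> \<infinity>" unfolding t_def .
  have t0: "0 \<le> t k" for k unfolding t_def using l by (simp add: emul_nonneg)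
  obtain z where z: "0 < ereal z" "ereal z < limsup g" using ereal_dense2[OF pos] by blast
  obtain t' where t': "t = (\<lambda>k. ereal (t' k))" using suminf_PInfty_fun[OF t0 fin] by blast
  have "summable t'" using t0 fin unfolding t' by (intro summable_ereal) auto
  then have "eventually (\<lambda>k. t' k < \<gamma> * z) sequentially"
    using \<gamma>(1) z(1) by (intro order_tendstoD(2)[OF summable_LIMSEQ_zero]) auto
  then have "eventually (\<lambda>k. g k \<le> ereal z) sequentially"
    unfolding eventually_sequentially
  proof (elim exE, intro exI allI impI)
    fix N k assume small: "\<forall>k\<ge>N. t' k < \<gamma> * z" and "max N (Suc m) \<le> k"
    then have "m < k" "t' k < \<gamma> * z" by auto
    show "g k \<le> ereal z"
    proof (rule ccontr)
      assume "\<not> g k \<le> ereal z"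
      then have "ereal (\<gamma> * z) \<le> t k" unfolding t_def
        using \<gamma> \<open>m < k\<close> z(1) by (auto intro!: emul_max_ge)
      with \<open>t' k < \<gamma> * z\<close> show False unfolding t' by simp
    qed
  qed
  then have "limsup g \<le> ereal z" by (rule Limsup_bounded)
  with z(2) show False by simp
qed

lemma limsup_mult_le_emul:
  fixes m s :: "nat \<Rightarrow> real"
  assumes m: "\<And>N. 0 \<le> m N" "m \<longlonglongrightarrow> c" and s: "(\<lambda>N. ereal (s N)) \<longlonglongrightarrow> L" "\<And>N. s N \<le> B"
  shows "limsup (\<lambda>N. ereal (m N * s N)) \<le> emul c L"
proof -
  have "L \<le> ereal B" using s by (intro LIMSEQ_le_const2[OF s(1)]) auto
  then have L_fin: "L \<noteq> \<infinity>" by auto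
  show ?thesis
  proof (cases "c = 0")
    case False
    then have "(\<lambda>N. ereal (m N) * ereal (s N)) \<longlonglongrightarrow> ereal c * L"
      using m(2) s(1) by (intro tendsto_mult_ereal) auto
    then have "limsup (\<lambda>N. ereal (m N * s N)) = ereal c * L" by (intro lim_imp_Limsup) auto
    then show ?thesis using L_fin by (simp add: emul_def)
  next
    case True
    have "m N * s N \<le> m N * max B 0" for N using m(1)[of N] s(2)[of N] by (intro mult_left_mono) auto
    then have "limsup (\<lambda>N. ereal (m N * s N)) \<le> limsup (\<lambda>N. ereal (m N * max B 0))"
      by (intro Limsup_mono always_eventually) simp
    also have "(\<lambda>N. ereal (m N * max B 0)) \<longlonglongrightarrow> ereal 0"
      using m(2) True by (intro tendsto_ereal) (auto intro: tendsto_eq_intros)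
    then have "limsup (\<lambda>N. ereal (m N * max B 0)) = 0" by (simp add: lim_imp_Limsup zero_ereal_def)
    also have "0 \<le> emul c L" using True L_fin by (cases L) (simp_all add: emul_def)
    finally show ?thesis .
  qed
qed

section \<open>Convex programs with countably many constraints\<close>

definition weights :: "real \<Rightarrow> (nat \<Rightarrow> real) set" where
  "weights \<mu> = {w. w 0 = 0 \<and> (\<forall>k. 0 \<le> w k) \<and> (\<forall>n. (\<Sum>k=1..n. w k) \<le> \<mu>)}"

lemma weights_le:
  assumes "w \<in> weights \<mu>" shows "w k \<le> \<mu>"
proof -
  have w: "w 0 = 0" "\<And>k. 0 \<le> w k" "\<And>n. (\<Sum>k=1..n. w k) \<le> \<mu>"
    using assms unfolding weights_def by auto
  have "w k \<le> (\<Sum>i=1..k. w i)"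
  proof (cases "k = 0")
    case False
    then show ?thesis using w(2) by (intro member_le_sum) auto
  qed (use w(1) in simp)
  with w(3)[of k] show ?thesis by linarith
qed

lemma compact_weights: "compact (weights \<mu>)"
proof -
  have "compact (\<Pi>\<^sub>E k\<in>UNIV. {0..\<mu>})"
    using compactin_PiE[of "\<lambda>_. euclidean" UNIV "\<lambda>_. {0..\<mu>}"]
    by (simp add: euclidean_product_topology compactin_euclidean_iff)
  moreover have "weights \<mu> = {w. w 0 = 0} \<inter> (\<Inter>k. {w. 0 \<le> w k}) \<inter> (\<Inter>n. {w. (\<Sum>k=1..n. w k) \<le> \<mu>})"
    unfolding weights_def by auto
  then have "closed (weights \<mu>)"
    by (simp only:) (intro closed_Int closed_INT ballI closed_Collect_eq closed_Collect_le continuous_intros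
          continuous_on_product_coordinates)
  ultimately have "compact ((\<Pi>\<^sub>E k\<in>UNIV. {0..\<mu>}) \<inter> weights \<mu>)" by (rule compact_Int_closed)
  moreover have "weights \<mu> \<subseteq> (\<Pi>\<^sub>E k\<in>UNIV. {0..\<mu>})"
    using weights_le by (auto simp: weights_def PiE_iff)
  ultimately show ?thesis by (simp add: Int_absorb1)
qed

lemma convex_seqs_weights: "convex_seqs (weights \<mu>)"
  unfolding convex_seqs_def
proof (intro ballI allI impI)
  fix w w' and t :: real assume w: "w \<in> weights \<mu>" "w' \<in> weights \<mu>" and t: "0 \<le> t \<and> t \<le> 1"
  have "(\<Sum>k=1..n. (1 - t) * w k + t * w' k) \<le> \<mu>" for n
  proof -
    have "(\<Sum>k=1..n. (1 - t) * w k + t * w' k) = (1 - t) * (\<Sum>k=1..n. w k) + t * (\<Sum>k=1..n. w' k)"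
      by (simp add: sum.distrib sum_distrib_left)
    also have "\<dots> \<le> (1 - t) * \<mu> + t * \<mu>"
      using w t unfolding weights_def by (intro add_mono mult_left_mono) auto
    finally show ?thesis by (simp add: algebra_simps)
  qed
  then show "(\<lambda>k. (1 - t) * w k + t * w' k) \<in> weights \<mu>" using w t unfolding weights_def by auto
qed

lemma sum_lessThan_Suc_eq_atLeast1: "(w::nat \<Rightarrow> real) 0 = 0 \<Longrightarrow> (\<Sum>k<Suc n. w k) = (\<Sum>k=1..n. w k)"
  by (induction n) auto

lemma weights_summable:
  assumes "w \<in> weights \<mu>"
  shows "summable w" "suminf w \<le> \<mu>" "(\<lambda>N. \<Sum>k=1..N. w k) \<longlonglongrightarrow> suminf w"
proof -
  have w0: "w 0 = 0" and nonneg: "\<And>k. 0 \<le> w k" and partial: "\<And>n. (\<Sum>k=1..n. w k) \<le> \<mu>"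
    using assms unfolding weights_def by auto
  have bound: "(\<Sum>k<n. w k) \<le> \<mu>" for n
  proof (cases n)
    case (Suc j)
    then show ?thesis using partial[of j] sum_lessThan_Suc_eq_atLeast1[of w j] w0 by simp
  qed (use partial[of 0] in simp)
  show sw: "summable w" by (rule summableI_nonneg_bounded[OF nonneg bound])
  show "suminf w \<le> \<mu>" by (rule suminf_le_const[OF sw bound])
  have "(\<lambda>n. \<Sum>k<Suc n. w k) \<longlonglongrightarrow> suminf w" by (rule LIMSEQ_Suc[OF summable_LIMSEQ[OF sw]])
  then show "(\<lambda>N. \<Sum>k=1..N. w k) \<longlonglongrightarrow> suminf w" unfolding sum_lessThan_Suc_eq_atLeast1[of w, OF w0] .
qed

lemma ell1_plus_weights: "w \<in> weights \<mu> \<Longrightarrow> ell1_plus w"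
  unfolding ell1_plus_def using weights_summable(1) by (auto simp: weights_def)

lemma lsc_hull_le_of_right:
  assumes "\<And>\<epsilon>. 0 < \<epsilon> \<Longrightarrow> v (x + \<epsilon>) \<le> c"
  shows "lsc_hull v x \<le> c"
  unfolding lsc_hull_def
proof (rule Sup_least)
  fix y assume "y \<in> {g x |g. lsc g \<and> (\<forall>y. g y \<le> v y)}"
  then obtain g where g: "y = g x" "lsc g" "\<And>y. g y \<le> v y" by auto
  have "g x \<le> Liminf (at x) g" using g(2) unfolding lsc_def by blast
  also have "\<dots> \<le> c" unfolding Liminf_def
  proof (rule SUP_least)
    fix P assume "P \<in> {P. eventually P (at x)}"
    then obtain d where d: "0 < d" "\<And>z. z \<noteq> x \<Longrightarrow> dist z x < d \<Longrightarrow> P z"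
      unfolding eventually_at by auto
    then have "P (x + d / 2)" by (simp add: dist_real_def)
    then have "Inf (g ` Collect P) \<le> g (x + d / 2)" by (intro INF_lower) auto
    also have "\<dots> \<le> v (x + d / 2)" by (rule g(3))
    also have "\<dots> \<le> c" using d(1) by (intro assms) simp
    finally show "Inf (g ` Collect P) \<le> c" .
  qed
  finally show "y \<le> c" using g(1) by simp
qed

lemma valfun_le: "(\<And>k. 1 \<le> k \<Longrightarrow> f k x \<le> ereal \<epsilon>) \<Longrightarrow> valfun f \<epsilon> \<le> f 0 x"
  unfolding valfun_def by (intro Inf_lower) auto

text \<open>The shift by \<open>\<alpha>\<close> makes every tail weight at least \<open>\<lambda>\<^sub>\<infinity> + \<alpha> > 0\<close>, so that the
  penalty in \<open>L\<^sub>m\<close> is infinite wherever \<open>L\<close> is.\<close>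

definition tail_shift :: "nat \<Rightarrow> (nat \<Rightarrow> real) \<Rightarrow> real \<Rightarrow> nat \<Rightarrow> real" where
  "tail_shift m l li = (\<lambda>k. if k \<le> m then l k else l k + li + (if li > 0 then 0 else 1))"

lemma tail_shift_ge:
  assumes "\<And>k. 0 \<le> l k" "0 \<le> li" "m < k"
  shows "li + (if li > 0 then 0 else 1) \<le> tail_shift m l li k"
  using assms by (auto simp: tail_shift_def)

lemma ellinf_plus_tail_shift:
  assumes l: "ell1_plus l" and li: "0 \<le> li"
  shows "ellinf_plus (tail_shift m l li)"
proof -
  have l0: "\<And>k. 0 \<le> l k" and "summable l" using l unfolding ell1_plus_def by auto
  then have lk: "l k \<le> suminf l" for k using sum_le_suminf[of l "{k}"] by simp
  have "\<bar>tail_shift m l li k\<bar> \<le> suminf l + li + 1" for k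
    using l0[of k] lk[of k] li by (auto simp: tail_shift_def)
  then have "bounded (range (tail_shift m l li))" unfolding bounded_iff by auto
  moreover have "0 \<le> tail_shift m l li k" for k using l0[of k] li by (simp add: tail_shift_def)
  ultimately show ?thesis unfolding ellinf_plus_def by blast
qed

locale convex_program =
  fixes f :: "nat \<Rightarrow> 'a::real_vector \<Rightarrow> ereal"
  assumes proper: "\<And>k. proper_convex (f k)"
begin

lemma f_not_MInf: "f k x \<noteq> -\<infinity>"
  using proper[of k] unfolding proper_convex_def by auto

definition fin_dom :: "'a set" where
  "fin_dom = {x. f 0 x < \<infinity> \<and> (SUP k\<in>{1..}. f k x) < \<infinity>}"

text \<open>Real versions of the data, meaningful on \<open>fin_dom\<close> only: elsewhere \<open>real_of_ereal\<close> and
  the real supremum return junk values.\<close>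

definition fr :: "nat \<Rightarrow> 'a \<Rightarrow> real" where
  "fr k x = real_of_ereal (f k x)"

definition tail_sup :: "nat \<Rightarrow> 'a \<Rightarrow> real" where
  "tail_sup N x = (SUP k\<in>{N<..}. fr k x)"

lemma f_le_SUP: "1 \<le> k \<Longrightarrow> f k x \<le> (SUP k\<in>{1..}. f k x)"
  by (intro SUP_upper) auto

lemma f_eq_fr:
  assumes "x \<in> fin_dom" shows "f k x = ereal (fr k x)"
proof -
  have "f k x < \<infinity>"
  proof (cases "k = 0")
    case False
    then show ?thesis using assms f_le_SUP[of k x] unfolding fin_dom_def by auto
  qed (use assms fin_dom_def in auto)
  then show ?thesis unfolding fr_def using f_not_MInf[of k x] by (cases "f k x") auto
qed

lemma mem_fin_dom:
  assumes "f 0 x < \<infinity>" "\<And>k. 1 \<le> k \<Longrightarrow> f k x \<le> ereal b"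
  shows "x \<in> fin_dom"
proof -
  have "(SUP k\<in>{1..}. f k x) \<le> ereal b" by (rule SUP_least) (use assms(2) in auto)
  then show ?thesis using assms(1) unfolding fin_dom_def by (auto intro: order.strict_trans1)
qed

lemma bdd_above_fr:
  assumes "x \<in> fin_dom" shows "bdd_above ((\<lambda>k. fr k x) ` {N<..})"
proof -
  have "(SUP k\<in>{1..}. f k x) \<noteq> -\<infinity>" using f_le_SUP[of 1 x] f_not_MInf[of 1 x] by auto
  moreover have "(SUP k\<in>{1..}. f k x) \<noteq> \<infinity>" using assms unfolding fin_dom_def by auto
  ultimately obtain b where b: "(SUP k\<in>{1..}. f k x) = ereal b" by (cases "SUP k\<in>{1..}. f k x") auto
  have "f k x \<le> ereal b" if "N < k" for k unfolding b[symmetric] using that by (intro f_le_SUP) simp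
  then have "fr k x \<le> b" if "N < k" for k using that f_eq_fr[OF assms, of k] by (metis ereal_less_eq(3))
  then show ?thesis by (intro bdd_aboveI[of _ b]) auto
qed

lemma fr_le_tail_sup: "x \<in> fin_dom \<Longrightarrow> N < k \<Longrightarrow> fr k x \<le> tail_sup N x"
  unfolding tail_sup_def using bdd_above_fr by (intro cSUP_upper) auto

lemma tail_sup_Suc_le: "x \<in> fin_dom \<Longrightarrow> tail_sup (Suc N) x \<le> tail_sup N x"
  unfolding tail_sup_def using bdd_above_fr by (intro cSUP_subset_mono) auto

lemma ereal_tail_sup:
  assumes x: "x \<in> fin_dom" shows "ereal (tail_sup N x) = (SUP k\<in>{N<..}. f k x)"
proof -
  obtain b where "\<And>k. N < k \<Longrightarrow> fr k x \<le> b" using bdd_above_fr[OF x, of N] by (auto simp: bdd_above_def)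
  then have "(SUP k\<in>{N<..}. ereal (fr k x)) \<le> ereal b" by (intro SUP_least) auto
  moreover have "ereal (fr (Suc N) x) \<le> (SUP k\<in>{N<..}. ereal (fr k x))" by (intro SUP_upper) auto
  ultimately have "\<bar>SUP k\<in>{N<..}. ereal (fr k x)\<bar> \<noteq> \<infinity>" by auto
  then show ?thesis unfolding tail_sup_def f_eq_fr[OF x] by (rule ereal_SUP)
qed

lemma tail_sup_le_iff:
  assumes "x \<in> fin_dom" shows "tail_sup 0 x \<le> b \<longleftrightarrow> (\<forall>k\<ge>1. f k x \<le> ereal b)"
proof -
  have "tail_sup 0 x \<le> b \<longleftrightarrow> (SUP k\<in>{0<..}. f k x) \<le> ereal b"
    using ereal_tail_sup[OF assms, of 0] by (metis ereal_less_eq(3))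
  also have "\<dots> \<longleftrightarrow> (\<forall>k\<ge>1. f k x \<le> ereal b)" by (auto simp: SUP_le_iff Suc_le_eq)
  finally show ?thesis .
qed

lemma f_comb_le:
  assumes x: "x \<in> fin_dom" and y: "y \<in> fin_dom" and t: "0 < t" "t < 1"
  shows "f k ((1 - t) *\<^sub>R x + t *\<^sub>R y) \<le> ereal ((1 - t) * fr k x + t * fr k y)"
proof -
  have "f k ((1 - t) *\<^sub>R x + t *\<^sub>R y) \<le> ereal (1 - t) * f k x + ereal t * f k y"
    using proper[of k] t unfolding proper_convex_def by blast
  then show ?thesis by (simp add: f_eq_fr[OF x] f_eq_fr[OF y])
qed

lemma convex_fin_dom: "convex fin_dom"
  unfolding convex_alt
proof (intro ballI allI impI)
  fix x y and t :: real assume x: "x \<in> fin_dom" and y: "y \<in> fin_dom" and t: "0 \<le> t \<and> t \<le> 1"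
  show "(1 - t) *\<^sub>R x + t *\<^sub>R y \<in> fin_dom"
  proof (cases "t = 0 \<or> t = 1")
    case False
    with t have t: "0 < t" "t < 1" by auto
    show ?thesis
    proof (rule mem_fin_dom)
      show "f 0 ((1 - t) *\<^sub>R x + t *\<^sub>R y) < \<infinity>" using f_comb_le[OF x y t, of 0] by auto
      fix k :: nat assume "1 \<le> k"
      then have "(1 - t) * fr k x + t * fr k y \<le> (1 - t) * tail_sup 0 x + t * tail_sup 0 y"
        using fr_le_tail_sup[OF x, of 0 k] fr_le_tail_sup[OF y, of 0 k] t
        by (intro add_mono mult_left_mono) auto
      then show "f k ((1 - t) *\<^sub>R x + t *\<^sub>R y) \<le> ereal ((1 - t) * tail_sup 0 x + t * tail_sup 0 y)"
        using f_comb_le[OF x y t, of k] by (auto intro: order_trans)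
    qed
  qed (use x y in auto)
qed

lemma convex_on_fr: "convex_on fin_dom (fr k)"
proof (rule convex_onI[OF _ convex_fin_dom])
  fix t :: real and x y assume "0 < t" "t < 1" "x \<in> fin_dom" "y \<in> fin_dom"
  with f_comb_le[of x y t k] f_eq_fr[of "(1 - t) *\<^sub>R x + t *\<^sub>R y" k] convex_fin_dom
  show "fr k ((1 - t) *\<^sub>R x + t *\<^sub>R y) \<le> (1 - t) * fr k x + t * fr k y"
    by (simp add: convex_alt)
qed

lemma convex_on_tail_sup: "convex_on fin_dom (tail_sup N)"
proof (rule convex_onI[OF _ convex_fin_dom])
  fix t :: real and x y assume t: "0 < t" "t < 1" and x: "x \<in> fin_dom" and y: "y \<in> fin_dom"
  show "tail_sup N ((1 - t) *\<^sub>R x + t *\<^sub>R y) \<le> (1 - t) * tail_sup N x + t * tail_sup N y"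
    unfolding tail_sup_def[of N "(1 - t) *\<^sub>R x + t *\<^sub>R y"]
  proof (rule cSUP_least)
    fix k assume "k \<in> {N<..}"
    then have "(1 - t) * fr k x + t * fr k y \<le> (1 - t) * tail_sup N x + t * tail_sup N y"
      using fr_le_tail_sup[OF x, of N k] fr_le_tail_sup[OF y, of N k] t
      by (intro add_mono mult_left_mono) auto
    then show "fr k ((1 - t) *\<^sub>R x + t *\<^sub>R y) \<le> (1 - t) * tail_sup N x + t * tail_sup N y"
      using convex_onD[OF convex_on_fr, of t x y k] t x y by simp
  qed simp
qed

text \<open>The truncated Lagrangian puts the mass \<open>\<mu> - \<Sum>\<^sub>k\<^sub>\<le>\<^sub>N w\<^sub>k\<close> not yet assigned on the
  supremum of the remaining constraints. It decreases in \<open>N\<close>, and lower bounds valid for all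
  \<open>N\<close> pass to \<open>L(x, w, \<mu> - \<Sum> w)\<close>: the mass escaping to infinity becomes \<open>\<lambda>\<^sub>\<infinity>\<close>.\<close>

definition trunc_lagr :: "real \<Rightarrow> nat \<Rightarrow> 'a \<Rightarrow> (nat \<Rightarrow> real) \<Rightarrow> real" where
  "trunc_lagr \<mu> N x w =
     fr 0 x + (\<Sum>k=1..N. w k * fr k x) + (\<mu> - (\<Sum>k=1..N. w k)) * tail_sup N x"

lemma trunc_lagr_Suc_le:
  assumes x: "x \<in> fin_dom" and w: "w \<in> weights \<mu>"
  shows "trunc_lagr \<mu> (Suc N) x w \<le> trunc_lagr \<mu> N x w"
proof -
  have "trunc_lagr \<mu> N x w - trunc_lagr \<mu> (Suc N) x w =
      w (Suc N) * (tail_sup N x - fr (Suc N) x)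
      + (\<mu> - (\<Sum>k=1..Suc N. w k)) * (tail_sup N x - tail_sup (Suc N) x)"
    by (simp add: trunc_lagr_def algebra_simps)
  moreover have "0 \<le> w (Suc N) * (tail_sup N x - fr (Suc N) x)"
    using w fr_le_tail_sup[OF x, of N "Suc N"] unfolding weights_def by auto
  moreover have "(\<Sum>k=1..Suc N. w k) \<le> \<mu>" using w unfolding weights_def by blast
  then have "0 \<le> (\<mu> - (\<Sum>k=1..Suc N. w k)) * (tail_sup N x - tail_sup (Suc N) x)"
    using tail_sup_Suc_le[OF x, of N] by (intro mult_nonneg_nonneg) auto
  ultimately show ?thesis by linarith
qed

lemma convex_on_trunc_lagr:
  assumes "w \<in> weights \<mu>" shows "convex_on fin_dom (\<lambda>x. trunc_lagr \<mu> N x w)"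
proof -
  have "0 \<le> w k" "0 \<le> \<mu> - (\<Sum>k=1..N. w k)" for k using assms unfolding weights_def by auto
  then show ?thesis unfolding trunc_lagr_def
    by (intro convex_on_add convex_on_sum_fun convex_on_cmul convex_on_fr convex_on_tail_sup
        convex_fin_dom) auto
qed

lemma trunc_lagr_comb:
  "(1 - t) * trunc_lagr \<mu> N x w + t * trunc_lagr \<mu> N x w' =
     trunc_lagr \<mu> N x (\<lambda>k. (1 - t) * w k + t * w' k)"
proof -
  have s1: "(\<Sum>k=1..N. ((1 - t) * w k + t * w' k) * fr k x) =
      (1 - t) * (\<Sum>k=1..N. w k * fr k x) + t * (\<Sum>k=1..N. w' k * fr k x)"
    unfolding sum_distrib_left sum.distrib[symmetric] by (rule sum.cong) (auto simp: algebra_simps)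
  have s2: "(\<Sum>k=1..N. (1 - t) * w k + t * w' k) = (1 - t) * (\<Sum>k=1..N. w k) + t * (\<Sum>k=1..N. w' k)"
    by (simp add: sum.distrib sum_distrib_left)
  show ?thesis unfolding trunc_lagr_def s1 s2 by (simp add: algebra_simps)
qed

lemma saddle_sequence_trunc_lagr:
  assumes "fin_dom \<noteq> {}" shows "saddle_sequence fin_dom (weights \<mu>) (trunc_lagr \<mu>)"
proof
  show "continuous_on UNIV (trunc_lagr \<mu> N x)" for N x
    unfolding trunc_lagr_def by (intro continuous_intros continuous_on_product_coordinates)
qed (use assms in \<open>auto simp: convex_fin_dom compact_weights convex_seqs_weights trunc_lagr_comb
        trunc_lagr_Suc_le convex_on_trunc_lagr\<close>)

text \<open>For a single point the inner supremum of the minimax theorem is witnessed by putting the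
  whole mass \<open>\<mu>\<close> on one almost worst constraint.\<close>

lemma point_mass_trunc_lagr:
  assumes x: "x \<in> fin_dom" and \<mu>: "0 \<le> \<mu>" and r: "r < fr 0 x + \<mu> * tail_sup 0 x"
  shows "\<exists>w\<in>weights \<mu>. \<forall>N. r < trunc_lagr \<mu> N x w"
proof -
  obtain k where k: "1 \<le> k" "r < fr 0 x + \<mu> * fr k x"
  proof (cases "\<mu> = 0")
    case True
    with r show thesis by (intro that[of 1]) auto
  next
    case False
    with \<mu> r have "(r - fr 0 x) / \<mu> < tail_sup 0 x" by (simp add: pos_divide_less_eq mult.commute)
    then obtain k where "0 < k" "(r - fr 0 x) / \<mu> < fr k x"
      unfolding tail_sup_def using less_cSUP_iff[OF _ bdd_above_fr[OF x]] by auto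
    with \<mu> False show thesis by (intro that[of k]) (auto simp: pos_divide_less_eq algebra_simps)
  qed
  define w where "w j = (if j = k then \<mu> else 0)" for j
  have "(\<Sum>j=1..N. w j * fr j x) = (\<Sum>j=1..N. if j = k then \<mu> * fr k x else 0)" for N
    by (rule sum.cong) (auto simp: w_def)
  then have sums: "(\<Sum>j=1..N. w j) = (if k \<le> N then \<mu> else 0)"
    "(\<Sum>j=1..N. w j * fr j x) = (if k \<le> N then \<mu> * fr k x else 0)" for N
    unfolding w_def using k(1) by (simp_all add: sum.delta)
  have "w \<in> weights \<mu>" unfolding weights_def using k(1) \<mu> sums(1) by (auto simp: w_def)
  moreover have "r < trunc_lagr \<mu> N x w" for N
  proof (cases "k \<le> N")
    case False
    then have "\<mu> * fr k x \<le> \<mu> * tail_sup N x" using \<mu> fr_le_tail_sup[OF x, of N k] by (simp add: mult_left_mono)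
    with False k show ?thesis unfolding trunc_lagr_def sums by simp
  qed (use k in \<open>simp only: trunc_lagr_def sums, simp\<close>)
  ultimately show ?thesis by blast
qed

lemma tail_sup_tendsto_limsup:
  assumes x: "x \<in> fin_dom"
  shows "(\<lambda>N. ereal (tail_sup N x)) \<longlonglongrightarrow> limsup (\<lambda>k. f k x)"
proof -
  have "decseq (\<lambda>n. SUP k\<in>{n..}. f k x)" by (intro decseq_SucI SUP_subset_mono) auto
  then have "(\<lambda>n. SUP k\<in>{n..}. f k x) \<longlonglongrightarrow> limsup (\<lambda>k. f k x)"
    unfolding limsup_INF_SUP by (rule LIMSEQ_INF)
  moreover have "ereal (tail_sup N x) = (SUP k\<in>{Suc N..}. f k x)" for N
    using ereal_tail_sup[OF x, of N] by (simp add: atLeast_Suc_greaterThan)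
  ultimately show ?thesis using LIMSEQ_Suc by force
qed

lemma lagr_on_fin_dom:
  assumes x: "x \<in> fin_dom"
  shows "lagr f x l li =
    ereal (fr 0 x) + limsup (\<lambda>n. ereal (\<Sum>k=1..n. l k * fr k x)) + emul li (limsup (\<lambda>k. f k x))"
  unfolding lagr_def f_inf_def by (simp add: f_eq_fr[OF x, of 0] f_eq_fr[OF x] emul_ereal)

lemma lagr_ge_of_trunc_lagr_ge:
  assumes x: "x \<in> fin_dom" and w: "w \<in> weights \<mu>" and ge: "\<And>N. r \<le> trunc_lagr \<mu> N x w"
  shows "ereal r \<le> lagr f x w (\<mu> - suminf w)"
proof -
  define P where "P N = ereal (\<Sum>k=1..N. w k * fr k x)" for N
  define m where "m N = \<mu> - (\<Sum>k=1..N. w k)" for N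
  have "ereal (r - fr 0 x) \<le> P N + ereal (m N * tail_sup N x)" for N
    using ge[of N] unfolding trunc_lagr_def P_def m_def by simp
  then have "limsup (\<lambda>N. ereal (r - fr 0 x)) \<le> limsup (\<lambda>N. P N + ereal (m N * tail_sup N x))"
    by (intro Limsup_mono always_eventually) simp
  then have "ereal (r - fr 0 x) \<le> limsup (\<lambda>N. P N + ereal (m N * tail_sup N x))"
    by (simp add: Limsup_const)
  also have "\<dots> \<le> limsup P + limsup (\<lambda>N. ereal (m N * tail_sup N x))"
    by (rule ereal_limsup_add_mono)
  also have "limsup (\<lambda>N. ereal (m N * tail_sup N x)) \<le> emul (\<mu> - suminf w) (limsup (\<lambda>k. f k x))"
  proof (rule limsup_mult_le_emul)
    show "0 \<le> m N" for N using w unfolding weights_def m_def by auto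
    show "m \<longlonglongrightarrow> \<mu> - suminf w" unfolding m_def by (intro tendsto_intros weights_summable(3)[OF w])
    show "tail_sup N x \<le> tail_sup 0 x" for N
      using decseq_SucI[of "\<lambda>N. tail_sup N x", OF tail_sup_Suc_le[OF x]] by (simp add: decseq_def)
  qed (rule tail_sup_tendsto_limsup[OF x])
  finally have "ereal (r - fr 0 x) \<le> limsup P + emul (\<mu> - suminf w) (limsup (\<lambda>k. f k x))"
    by (simp add: add_left_mono)
  then have "ereal r \<le> ereal (fr 0 x) + (limsup P + emul (\<mu> - suminf w) (limsup (\<lambda>k. f k x)))"
    by (cases "limsup P + emul (\<mu> - suminf w) (limsup (\<lambda>k. f k x))") auto
  then show ?thesis unfolding lagr_on_fin_dom[OF x] P_def by (simp add: add.assoc)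
qed

lemma SUP_eq_top_outside_fin_dom:
  assumes "x \<notin> fin_dom" "f 0 x \<noteq> \<infinity>" shows "(SUP k\<in>{1..}. f k x) = \<infinity>"
  using assms unfolding fin_dom_def by auto

lemma lagr_outside_fin_dom:
  assumes x: "x \<notin> fin_dom" and l: "\<And>k. 0 \<le> l k"
  shows "lagr f x l li = \<infinity>"
proof (cases "f 0 x = \<infinity>")
  case False
  with x have sup: "(SUP k\<in>{1..}. f k x) = \<infinity>" by (rule SUP_eq_top_outside_fin_dom)
  show ?thesis
  proof (cases "\<exists>k\<ge>1. f k x = \<infinity>")
    case True
    then obtain k where k: "1 \<le> k" "f k x = \<infinity>" by blast
    then have "eventually (\<lambda>n. (\<Sum>j=1..n. emul (l j) (f j x)) = \<infinity>) sequentially"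
      unfolding eventually_sequentially sum_Pinfty by (intro exI[of _ k]) (auto simp: emul_def)
    then have "limsup (\<lambda>n. \<Sum>j=1..n. emul (l j) (f j x)) = \<infinity>"
      by (intro lim_imp_Limsup tendsto_eventually) auto
    then show ?thesis by (simp add: lagr_def)
  next
    case False
    then have "limsup (\<lambda>k. f k x) = \<infinity>"
      using sup by (intro limsup_eq_top_of_SUP[of 1]) auto
    then show ?thesis by (simp add: lagr_def f_inf_def emul_def)
  qed
qed (simp add: lagr_def)

lemma lagr_m_outside_fin_dom:
  assumes x: "x \<notin> fin_dom" and l: "\<And>k. 0 \<le> l k" and \<gamma>: "0 < \<gamma>" "\<And>k. m < k \<Longrightarrow> \<gamma> \<le> l k"
  shows "lagr_m f m x l = \<infinity>"
proof (cases "f 0 x = \<infinity>")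
  case False
  with x have sup: "(SUP k\<in>{1..}. f k x) = \<infinity>" by (rule SUP_eq_top_outside_fin_dom)
  show ?thesis
  proof (cases "\<exists>k\<in>{1..m}. f k x = \<infinity>")
    case True
    then have "(\<Sum>k=1..m. emul (l k) (f k x)) = \<infinity>" unfolding sum_Pinfty by (auto simp: emul_def)
    then show ?thesis by (simp add: lagr_m_def)
  next
    case False
    have "(SUP k\<in>{Suc m..}. f k x) = \<infinity>"
      by (rule SUP_tail_eq_top[where m = 1]) (use sup False in auto)
    then have tail: "(SUP k\<in>{m<..}. f k x) = \<infinity>" by (simp add: atLeast_Suc_greaterThan)
    have "(\<Sum>k. if m < k then emul (l k) (max (f k x) 0) else 0) = \<infinity>"
      by (rule tail_penalty_eq_top_of_SUP[where \<gamma> = \<gamma>]) (use \<gamma> l tail in auto)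
    then show ?thesis by (simp add: lagr_m_def)
  qed
qed (simp add: lagr_m_def)

lemma lagr_m_eq_top_of_limsup:
  assumes "0 < limsup (\<lambda>k. f k x)" "\<And>k. 0 \<le> l k" "0 < \<gamma>" "\<And>k. m < k \<Longrightarrow> \<gamma> \<le> l k"
  shows "lagr_m f m x l = \<infinity>"
  using tail_penalty_eq_top_of_limsup[of \<gamma> m l "\<lambda>k. f k x"] assms by (simp add: lagr_m_def)

lemma lagr_le_lagr_m_of_limsup_nonpos:
  assumes x: "x \<in> fin_dom" and L: "limsup (\<lambda>k. f k x) \<le> 0" and li: "0 \<le> li"
    and l: "\<And>k. 0 \<le> l k" "\<And>k. l k \<le> l' k" "\<And>k. k \<le> m \<Longrightarrow> l' k = l k"
  shows "lagr f x l li \<le> lagr_m f m x l'"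
proof -
  define s where "s = (\<Sum>k=1..m. l k * fr k x)"
  define t where "t k = (if m < k then l' k * max (fr k x) 0 else 0)" for k
  have t0: "0 \<le> t k" for k unfolding t_def using l by (simp add: order_trans[OF l(1,2)])
  have T: "(\<Sum>k. if m < k then emul (l' k) (max (f k x) 0) else 0) = (\<Sum>k. ereal (t k))"
    unfolding t_def f_eq_fr[OF x] by (intro suminf_cong) (simp add: emul_def max_def zero_ereal_def)
  have partial: "ereal (\<Sum>k=1..n. l k * fr k x) \<le> ereal s + (\<Sum>k. ereal (t k))" if "m \<le> n" for n
  proof -
    have "{1..n} = {1..m} \<union> {Suc m..n}" using that by auto
    then have "(\<Sum>k=1..n. l k * fr k x) = s + (\<Sum>k=Suc m..n. l k * fr k x)"
      unfolding s_def by (simp add: sum.union_disjoint)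
    also have "(\<Sum>k=Suc m..n. l k * fr k x) \<le> (\<Sum>k=Suc m..n. t k)"
    proof (rule sum_mono)
      fix k assume "k \<in> {Suc m..n}"
      then have "l k * fr k x \<le> l k * max (fr k x) 0 \<and> l k * max (fr k x) 0 \<le> t k"
        using l by (auto simp: t_def intro: mult_left_mono mult_right_mono)
      then show "l k * fr k x \<le> t k" by linarith
    qed
    also have "(\<Sum>k=Suc m..n. t k) \<le> (\<Sum>k<Suc n. t k)" using t0 by (intro sum_mono2) auto
    finally have "ereal (\<Sum>k=1..n. l k * fr k x) \<le> ereal s + ereal (\<Sum>k<Suc n. t k)" by simp
    also have "ereal (\<Sum>k<Suc n. t k) \<le> (\<Sum>k. ereal (t k))"
      using suminf_upper[of "\<lambda>k. ereal (t k)" "Suc n"] t0 by simp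
    finally show ?thesis by (simp add: add_left_mono)
  qed
  have "limsup (\<lambda>n. ereal (\<Sum>k=1..n. l k * fr k x)) \<le> ereal s + (\<Sum>k. ereal (t k))"
    using partial by (intro Limsup_bounded) (auto simp: eventually_sequentially)
  moreover have "emul li (limsup (\<lambda>k. f k x)) \<le> 0"
    using L li by (cases "limsup (\<lambda>k. f k x)") (auto simp: emul_def mult_nonneg_nonpos)
  ultimately have "lagr f x l li \<le> ereal (fr 0 x) + (ereal s + (\<Sum>k. ereal (t k))) + 0"
    unfolding lagr_on_fin_dom[OF x] by (intro add_mono) auto
  also have "\<dots> = lagr_m f m x l'"
    unfolding lagr_m_def T using l(3) by (simp add: f_eq_fr[OF x] emul_ereal s_def add.assoc[symmetric])
  finally show ?thesis .
qed

lemma lagr_le_lagr_m_tail_shift: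
  assumes l: "\<And>k. 0 \<le> l k" and li: "0 \<le> li"
  shows "lagr f x l li \<le> lagr_m f m x (tail_shift m l li)"
proof -
  define \<gamma> where "\<gamma> = li + (if li > 0 then 0 else 1)"
  have \<gamma>: "0 < \<gamma>" "\<And>k. m < k \<Longrightarrow> \<gamma> \<le> tail_shift m l li k"
    unfolding \<gamma>_def using li tail_shift_ge[OF l li] by auto
  have shift0: "0 \<le> tail_shift m l li k" for k using l li by (simp add: tail_shift_def)
  consider "x \<notin> fin_dom" | "0 < limsup (\<lambda>k. f k x)" | "x \<in> fin_dom" "limsup (\<lambda>k. f k x) \<le> 0"
    by force
  then show ?thesis
  proof cases
    case 1
    then show ?thesis using lagr_m_outside_fin_dom[OF 1 shift0 \<gamma>] by simp
  next
    case 2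
    then show ?thesis using lagr_m_eq_top_of_limsup[OF 2 shift0 \<gamma>] by simp
  next
    case 3
    then show ?thesis using l li by (intro lagr_le_lagr_m_of_limsup_nonpos) (auto simp: tail_shift_def)
  qed
qed

lemma vD_le_vDm: "vD f \<le> vDm f m"
  unfolding vD_def
proof (rule SUP_least, clarify)
  fix l and li :: real assume l: "ell1_plus l" and li: "0 \<le> li"
  have "(INF x. lagr f x l li) \<le> (INF x. lagr_m f m x (tail_shift m l li))"
  proof (rule INF_mono)
    fix x show "\<exists>y\<in>UNIV. lagr f y l li \<le> lagr_m f m x (tail_shift m l li)"
      using lagr_le_lagr_m_tail_shift[of l li x m] l li by (auto simp: ell1_plus_def)
  qed
  also have "\<dots> \<le> vDm f m"
    unfolding vDm_def using ellinf_plus_tail_shift[OF l li] by (intro SUP_upper) auto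
  finally show "(INF x. lagr f x (fst (l, li)) (snd (l, li))) \<le> vDm f m" by simp
qed

lemma lagr_m_le_f0:
  assumes l: "\<And>k. 0 \<le> l k" and feasible: "\<And>k. 1 \<le> k \<Longrightarrow> f k x \<le> 0"
  shows "lagr_m f m x l \<le> f 0 x"
proof -
  have "emul (l k) (f k x) \<le> 0" if "k \<in> {1..m}" for k
    using feasible[of k] that l[of k] f_not_MInf[of k x]
    by (cases "f k x") (auto simp: emul_def mult_nonneg_nonpos)
  then have "(\<Sum>k=1..m. emul (l k) (f k x)) \<le> 0" by (rule sum_nonpos)
  moreover have "(\<lambda>k. if m < k then emul (l k) (max (f k x) 0) else 0) = (\<lambda>k. 0)"
    using feasible by (auto simp: emul_def max_def)
  then have "lagr_m f m x l = f 0 x + (\<Sum>k=1..m. emul (l k) (f k x))" by (simp add: lagr_m_def)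
  ultimately show ?thesis using add_left_mono[of _ 0 "f 0 x"] by simp
qed

lemma vDm_le_valfun: "vDm f m \<le> valfun f 0"
  unfolding vDm_def
proof (rule SUP_least)
  fix l assume "l \<in> {l. ellinf_plus l}"
  then have l: "\<And>k. 0 \<le> l k" by (simp add: ellinf_plus_def)
  show "(INF x. lagr_m f m x l) \<le> valfun f 0" unfolding valfun_def
  proof (rule Inf_greatest, clarify)
    fix x assume "\<forall>k\<ge>1. f k x \<le> ereal 0"
    then have "lagr_m f m x l \<le> f 0 x" using l by (intro lagr_m_le_f0) (auto simp: zero_ereal_def)
    then show "(INF x. lagr_m f m x l) \<le> f 0 x" by (meson INF_lower UNIV_I order_trans)
  qed
qed

lemma INF_lagr_le_vD: "ell1_plus l \<Longrightarrow> 0 \<le> li \<Longrightarrow> (INF x. lagr f x l li) \<le> vD f"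
  unfolding vD_def by (intro SUP_upper2[of "(l, li)"]) auto

lemma lagr_multiplier_of_scalar:
  assumes \<mu>: "0 \<le> \<mu>" and nonempty: "fin_dom \<noteq> {}"
    and bound: "\<And>x. x \<in> fin_dom \<Longrightarrow> \<rho> \<le> fr 0 x + \<mu> * tail_sup 0 x"
  obtains l li where "ell1_plus l" "0 \<le> li" "\<forall>x. ereal \<rho> \<le> lagr f x l li"
proof -
  have point_mass: "\<exists>w\<in>weights \<mu>. \<forall>N. r < trunc_lagr \<mu> N x w" if "x \<in> fin_dom" "r < \<rho>" for x r
    using that bound[OF that(1)] by (intro point_mass_trunc_lagr[OF that(1) \<mu>]) simp
  obtain w where w: "w \<in> weights \<mu>" "\<forall>x\<in>fin_dom. \<forall>N. \<rho> \<le> trunc_lagr \<mu> N x w"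
    using saddle_sequence.minimax[OF saddle_sequence_trunc_lagr[OF nonempty, of \<mu>], where \<rho> = \<rho>, OF point_mass]
    by blast
  have "ereal \<rho> \<le> lagr f x w (\<mu> - suminf w)" for x
  proof (cases "x \<in> fin_dom")
    case True
    then show ?thesis using lagr_ge_of_trunc_lagr_ge[OF True w(1)] w(2) by blast
  next
    case False
    then show ?thesis using lagr_outside_fin_dom w(1) by (simp add: weights_def)
  qed
  moreover have "ell1_plus w" "0 \<le> \<mu> - suminf w"
    using ell1_plus_weights weights_summable(2) w(1) by auto
  ultimately show thesis using that by blast
qed

lemma dual_bound_of_strictly_feasible:
  assumes \<beta>: "0 \<le> \<beta>" and xs: "f 0 xs < \<infinity>" "(SUP k\<in>{1..}. f k xs) < ereal \<beta>"
    and \<rho>: "ereal \<rho> \<le> valfun f \<beta>"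
  obtains l li where "ell1_plus l" "0 \<le> li" "\<forall>x. ereal \<rho> \<le> lagr f x l li"
proof -
  have "f k xs \<le> ereal \<beta>" if "1 \<le> k" for k
    using f_le_SUP[OF that, of xs] xs(2) by (meson less_imp_le order.strict_trans1)
  then have xs_dom: "xs \<in> fin_dom" by (intro mem_fin_dom[OF xs(1)])
  have "ereal (tail_sup 0 xs) < ereal \<beta>"
    using ereal_tail_sup[OF xs_dom, of 0] xs(2) by (simp add: atLeast_Suc_greaterThan[symmetric])
  then have slater: "tail_sup 0 xs < \<beta>" by simp
  have feasible: "\<rho> \<le> fr 0 x" if "x \<in> fin_dom" "tail_sup 0 x \<le> \<beta>" for x
  proof -
    have "valfun f \<beta> \<le> f 0 x" using that tail_sup_le_iff[OF that(1)] by (intro valfun_le) auto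
    with \<rho> have "ereal \<rho> \<le> f 0 x" by (rule order_trans)
    then show ?thesis by (simp add: f_eq_fr[OF that(1)])
  qed
  obtain \<mu> where \<mu>: "0 \<le> \<mu>" "\<forall>x\<in>fin_dom. \<rho> \<le> fr 0 x + \<mu> * (tail_sup 0 x - \<beta>)"
    by (rule convex_scalar_multiplier[where \<rho> = \<rho>, OF convex_on_fr convex_on_tail_sup xs_dom slater feasible])
  have bound: "\<rho> \<le> fr 0 x + \<mu> * tail_sup 0 x" if "x \<in> fin_dom" for x
  proof -
    have "\<rho> \<le> fr 0 x + \<mu> * (tail_sup 0 x - \<beta>)" using \<mu>(2) that by blast
    moreover have "\<mu> * (tail_sup 0 x - \<beta>) \<le> \<mu> * tail_sup 0 x" using \<mu>(1) \<beta> by (simp add: right_diff_distrib)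
    ultimately show ?thesis by linarith
  qed
  from xs_dom have nonempty: "fin_dom \<noteq> {}" by auto
  obtain l li where "ell1_plus l" "0 \<le> li" "\<forall>x. ereal \<rho> \<le> lagr f x l li"
    by (rule lagr_multiplier_of_scalar[where \<rho> = \<rho>, OF \<mu>(1) nonempty bound])
  then show thesis by (rule that)
qed

lemma valfun_le_vD:
  assumes C: "\<exists>x. f 0 x < \<infinity> \<and> (\<forall>k\<ge>1. f k x \<le> 0)" and \<epsilon>: "0 < \<epsilon>"
  shows "valfun f \<epsilon> \<le> vD f"
proof (rule dense_le)
  fix a assume a: "a < valfun f \<epsilon>"
  obtain xs where xs: "f 0 xs < \<infinity>" "\<forall>k\<ge>1. f k xs \<le> 0" using C by blast
  have "(SUP k\<in>{1..}. f k xs) \<le> 0" using xs(2) by (intro SUP_least) auto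
  then have sup: "(SUP k\<in>{1..}. f k xs) < ereal \<epsilon>" by (rule order.strict_trans1) (simp add: \<epsilon>)
  show "a \<le> vD f"
  proof (cases a)
    case (real \<rho>)
    from a real have "ereal \<rho> \<le> valfun f \<epsilon>" by simp
    then obtain l li where l: "ell1_plus l" "0 \<le> li" "\<forall>x. ereal \<rho> \<le> lagr f x l li"
      by (rule dual_bound_of_strictly_feasible[OF less_imp_le[OF \<epsilon>] xs(1) sup])
    from l(3) have "ereal \<rho> \<le> (INF x. lagr f x l li)" by (simp add: INF_greatest)
    also have "\<dots> \<le> vD f" by (rule INF_lagr_le_vD[OF l(1,2)])
    finally show ?thesis using real by simp
  qed (use a in auto)
qed

lemma lsc_hull_valfun_le_vD:
  assumes "\<exists>x. f 0 x < \<infinity> \<and> (\<forall>k\<ge>1. f k x \<le> 0)"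
  shows "lsc_hull (valfun f) 0 \<le> vD f"
  using valfun_le_vD[OF assms] by (intro lsc_hull_le_of_right) simp

lemma slater_dual_bound:
  assumes C: "\<exists>x. f 0 x < \<infinity> \<and> (\<forall>k\<ge>1. f k x \<le> 0)" and vP: "valfun f 0 > -\<infinity>"
    and slater: "\<exists>x. f 0 x < \<infinity> \<and> (SUP k\<in>{1..}. f k x) < 0"
  obtains l li where "ell1_plus l" "0 \<le> li" "\<forall>x. valfun f 0 \<le> lagr f x l li"
proof -
  obtain xc where xc: "f 0 xc < \<infinity>" "\<forall>k\<ge>1. f k xc \<le> 0" using C by blast
  have "valfun f 0 \<le> f 0 xc" by (rule valfun_le) (use xc(2) in \<open>simp add: zero_ereal_def\<close>)
  with xc(1) have "valfun f 0 < \<infinity>" by (rule order.strict_trans1[rotated])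
  with vP obtain \<rho> where \<rho>: "valfun f 0 = ereal \<rho>" by (cases "valfun f 0") auto
  obtain xs where "f 0 xs < \<infinity>" "(SUP k\<in>{1..}. f k xs) < 0" using slater by blast
  then have xs: "f 0 xs < \<infinity>" "(SUP k\<in>{1..}. f k xs) < ereal 0" by (simp_all add: zero_ereal_def)
  from \<rho> have "ereal \<rho> \<le> valfun f 0" by simp
  then obtain l li where l: "ell1_plus l" "0 \<le> li" "\<forall>x. ereal \<rho> \<le> lagr f x l li"
    by (rule dual_bound_of_strictly_feasible[OF order_refl xs])
  from l(3) \<rho> have "\<forall>x. valfun f 0 \<le> lagr f x l li" by simp
  with l(1,2) show thesis by (rule that)
qed

lemma solDm_tail_shift:
  assumes sol: "solD f l li" and eq: "vD f = vDm f m"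
  shows "solDm f m (tail_shift m l li)"
proof -
  have l: "ell1_plus l" "0 \<le> li" "(INF x. lagr f x l li) = vD f" using sol unfolding solD_def by auto
  have shift: "ellinf_plus (tail_shift m l li)" by (rule ellinf_plus_tail_shift[OF l(1,2)])
  have "vDm f m \<le> (INF x. lagr_m f m x (tail_shift m l li))"
    unfolding eq[symmetric] l(3)[symmetric]
  proof (rule INF_mono)
    fix x show "\<exists>y\<in>UNIV. lagr f y l li \<le> lagr_m f m x (tail_shift m l li)"
      using lagr_le_lagr_m_tail_shift[of l li x m] l(1,2) by (auto simp: ell1_plus_def)
  qed
  moreover have "(INF x. lagr_m f m x (tail_shift m l li)) \<le> vDm f m"
    unfolding vDm_def using shift by (intro SUP_upper) auto
  ultimately show ?thesis unfolding solDm_def using shift by auto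
qed

end

theorem theorem3p4:
  fixes f :: "nat \<Rightarrow> 'a::banach \<Rightarrow> ereal"
  assumes proper: "\<And>k. proper_convex (f k)"
    and C_ne: "\<exists>x. f 0 x < \<infinity> \<and> (\<forall>k\<ge>1. f k x \<le> 0)"
    and vP_fin: "valfun f 0 > -\<infinity>"
  shows "(\<forall>m. lsc_hull (valfun f) 0 \<le> vD f \<and> vD f \<le> vDm f m \<and> vDm f m \<le> valfun f 0)
    \<and> ((\<exists>x. f 0 x < \<infinity> \<and> (SUP k\<in>{1..}. f k x) < 0) \<longrightarrow>
         (\<forall>m. valfun f 0 = vD f \<and> vD f = vDm f m)
       \<and> (\<exists>l linf. solD f l linf)
       \<and> (\<forall>m. \<exists>l. solDm f m l)
       \<and> (\<forall>l linf m. solD f l linf \<longrightarrow>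
            solDm f m (%k. if k \<le> m then l k
                           else l k + linf + (if linf > 0 then 0 else 1))))"
proof -
  interpret convex_program f by (rule convex_program.intro) (rule proper)
  have chain: "lsc_hull (valfun f) 0 \<le> vD f \<and> vD f \<le> vDm f m \<and> vDm f m \<le> valfun f 0" for m
    using lsc_hull_valfun_le_vD[OF C_ne] vD_le_vDm vDm_le_valfun by blast
  moreover have "(\<forall>m. valfun f 0 = vD f \<and> vD f = vDm f m) \<and> (\<exists>l linf. solD f l linf)
      \<and> (\<forall>m. \<exists>l. solDm f m l) \<and> (\<forall>l linf m. solD f l linf \<longrightarrow> solDm f m (tail_shift m l linf))"
    if slater: "\<exists>x. f 0 x < \<infinity> \<and> (SUP k\<in>{1..}. f k x) < 0"
  proof -
    obtain l li where l: "ell1_plus l" "0 \<le> li" "\<forall>x. valfun f 0 \<le> lagr f x l li"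
      by (rule slater_dual_bound[OF C_ne vP_fin slater])
    from l(3) have "valfun f 0 \<le> (INF x. lagr f x l li)" by (simp add: INF_greatest)
    with INF_lagr_le_vD[OF l(1,2)] chain
    have eq: "valfun f 0 = vD f \<and> vD f = vDm f m" and "(INF x. lagr f x l li) = vD f" for m
      by (meson order.antisym order.trans)+
    then have "solD f l li" unfolding solD_def using l(1,2) by blast
    with eq show ?thesis using solDm_tail_shift by blast
  qed
  ultimately show ?thesis unfolding tail_shift_def by blast
qed

end
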